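(* If there exists a $(4,1,p)$-QRA coding with $p>1/2$, then there exist vectors $\vec s_1,\dots,\vec s_4\in\mathbb{R}^3$ and reals $c_1,\dots,c_4$ such that for every $w=w_1w_2w_3w_4\in\{0,1\}^4$ the set $$D_w=\{\vec r\in B : \vec r\cdot\vec s_i>c_i \text{ for all } i \text{ with } w_i=0,\ \vec r\cdot \vec s_i<c_i \text{ for all } i\text{ with } w_i=1\}$$ is nonempty, where $B=\{\vec r\in\mathbb{R}^3: |\vec r|\le 1\}$ is the closed unit ball. In other words, the three-dimensional ball is divided into $16$ distinct nonempty regions by the $4$ planes $\{\vec r:\vec r\cdot\vec s_i=c_i\}$.
   Context: An $(n,m,p)$-quantum random access (QRA) coding is a map assigning to each $n$-bit string $x\in\{0,1\}^n$ an $m$-qubit state $\rho_x$ (a positive semidefinite trace-one operator on $\mathbb{C}^{2^m}$) such that for every $i\in\{1,\dots,n\}$ there is a POVM $E^i=\{E^i_0,E^i_1\}$ (i.e. $E^i_0,E^i_1$ are positive semidefinite Hermitian operators on $\mathbb{C}^{2^m}$ with $E^i_0+E^i_1=I$) satisfying $\mathrm{Tr}(E^i_{x_i}\rho_x)\ge p$ for all $x\in\{0,1\}^n$, where $x_i$ is the $i$-th bit of $x$. Every one-qubit state $\rho$ can be written uniquely as $\rho=\frac12(I+r_xX+r_yY+r_zZ)$ with $X,Y,Z$ the Pauli matrices and $\vec r=(r_x,r_y,r_z)\in\mathbb{R}^3$, $|\vec r|\le 1$ (the Bloch vector); the set of Bloch vectors is the closed unit ball $B$. *)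

theory Defs
  imports "HOL-Analysis.Analysis"
begin

text \<open>Operators on C^d are represented as functions nat => nat => complex,
  only the entries with indices below d being relevant.\<close>

type_synonym cmat = "nat \<Rightarrow> nat \<Rightarrow> complex"

definition hermitian :: "nat \<Rightarrow> cmat \<Rightarrow> bool" where
  "hermitian d A \<longleftrightarrow> (\<forall>i<d. \<forall>j<d. A i j = cnj (A j i))"

definition psd :: "nat \<Rightarrow> cmat \<Rightarrow> bool" where
  "psd d A \<longleftrightarrow> hermitian d A \<and>
     (\<forall>v :: nat \<Rightarrow> complex. 0 \<le> Re (\<Sum>i<d. \<Sum>j<d. cnj (v i) * A i j * v j))"

definition mtrace :: "nat \<Rightarrow> cmat \<Rightarrow> complex" where
  "mtrace d A = (\<Sum>i<d. A i i)"

definition mmult :: "nat \<Rightarrow> cmat \<Rightarrow> cmat \<Rightarrow> cmat" where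
  "mmult d A B = (\<lambda>i k. \<Sum>j<d. A i j * B j k)"

definition density :: "nat \<Rightarrow> cmat \<Rightarrow> bool" where
  "density d \<rho> \<longleftrightarrow> psd d \<rho> \<and> mtrace d \<rho> = 1"

text \<open>A two-outcome POVM {E False, E True} (False = outcome 0, True = outcome 1).\<close>
definition povm2 :: "nat \<Rightarrow> (bool \<Rightarrow> cmat) \<Rightarrow> bool" where
  "povm2 d E \<longleftrightarrow> psd d (E False) \<and> psd d (E True) \<and>
     (\<forall>i<d. \<forall>j<d. E False i j + E True i j = (if i = j then 1 else 0))"

text \<open>(n,m,p)-QRA coding. n-bit strings are bool lists of length n
  (True = bit 1), bit i (1-based in the paper) is x ! (i-1).\<close>
definition QRA :: "nat \<Rightarrow> nat \<Rightarrow> real \<Rightarrow> bool" where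
  "QRA n m p \<longleftrightarrow> (\<exists>(\<rho> :: bool list \<Rightarrow> cmat) (E :: nat \<Rightarrow> bool \<Rightarrow> cmat).
     (\<forall>x. length x = n \<longrightarrow> density (2^m) (\<rho> x)) \<and>
     (\<forall>i<n. povm2 (2^m) (E i)) \<and>
     (\<forall>x. length x = n \<longrightarrow> (\<forall>i<n. Re (mtrace (2^m) (mmult (2^m) (E i (x ! i)) (\<rho> x))) \<ge> p)))"

end

theory Submission
  imports Defs
begin

text \<open>A qubit state \<rho> = (I + r\<cdot>\<sigma>)/2 has its Bloch vector r in the unit ball, because
  positivity of \<rho> gives the determinant condition |\<rho>(0,1)|^2 \<le> \<rho>(0,0) \<rho>(1,1).
  For a hermitian effect E = e0 I + e\<cdot>\<sigma> the outcome probability Tr(E \<rho>) = e0 + r\<cdot>e is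
  affine in r, and the complementary effect has probability 1 - Tr(E \<rho>). So bit i is
  decoded with probability above 1/2 exactly when r lies on the correct side of the plane
  r\<cdot>e = 1/2 - e0 of the i-th measurement, and the Bloch vectors of the 16 code states
  realise all 16 sign patterns.\<close>

lemma binary_quadratic_nonneg_discriminant:
  fixes a b c :: real
  assumes nonneg: "\<And>x y. 0 \<le> a * x\<^sup>2 + 2 * c * x * y + b * y\<^sup>2"
  shows "c\<^sup>2 \<le> a * b"
proof -
  have "0 \<le> a" "0 \<le> b" using nonneg[of 1 0] nonneg[of 0 1] by simp_all
  consider "0 < a" | "0 < b" | "a = 0" "b = 0" using \<open>0 \<le> a\<close> \<open>0 \<le> b\<close> by linarith
  then show ?thesis
  proof cases
    case 1
    have "0 \<le> a * (a * b - c\<^sup>2)"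
      using nonneg[of "- c" a] by (simp add: power2_eq_square algebra_simps)
    with 1 show ?thesis by (simp add: zero_le_mult_iff)
  next
    case 2
    have "0 \<le> b * (a * b - c\<^sup>2)"
      using nonneg[of b "- c"] by (simp add: power2_eq_square algebra_simps)
    with 2 show ?thesis by (simp add: zero_le_mult_iff)
  next
    case 3
    then show ?thesis using nonneg[of "- c" 1] by (simp add: power2_eq_square)
  qed
qed

lemma psd_form_nonneg:
  assumes "psd d A"
  shows "0 \<le> Re (\<Sum>k<d. \<Sum>l<d. cnj (v k) * A k l * v l)"
  using assms unfolding psd_def by blast

lemma hermitian_entry:
  assumes "hermitian d A" "i < d" "j < d"
  shows "A j i = cnj (A i j)"
  using assms unfolding hermitian_def by blast

lemma hermitian_diag_real:
  assumes "hermitian d A" "i < d"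
  shows "Im (A i i) = 0"
  using arg_cong[OF hermitian_entry[OF assms assms(2)], of Im] by simp

lemma psd_diag_nonneg:
  assumes "psd d A" "i < d"
  shows "0 \<le> Re (A i i)"
  using psd_form_nonneg[OF assms(1), of "\<lambda>k. if k = i then 1 else 0"] assms(2)
  by (simp add: if_distrib[of "\<lambda>z. cnj z * _"] if_distrib[of "\<lambda>z. _ * z"] cong: if_cong)

lemma psd_form_two_indices:
  assumes "psd d A" "i < d" "j < d" "i \<noteq> j"
  shows "0 \<le> Re (A i i) * (cmod \<alpha>)\<^sup>2 + 2 * Re (cnj \<alpha> * \<beta> * A i j) + Re (A j j) * (cmod \<beta>)\<^sup>2"
proof -
  define v where "v k = (if k = i then \<alpha> else if k = j then \<beta> else 0)" for k
  have ij: "{i, j} \<subseteq> {..<d}" using assms(2,3) by simp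
  have "(\<Sum>k<d. \<Sum>l<d. cnj (v k) * A k l * v l)
      = (\<Sum>k\<in>{i,j}. \<Sum>l\<in>{i,j}. cnj (v k) * A k l * v l)"
    by (intro sum.mono_neutral_cong_right ij) (auto simp: v_def)
  also have "\<dots> = cnj \<alpha> * \<alpha> * A i i + (cnj \<alpha> * \<beta> * A i j + cnj (cnj \<alpha> * \<beta> * A i j))
      + cnj \<beta> * \<beta> * A j j"
  proof -
    have "A j i = cnj (A i j)" using assms(1,2,3) unfolding psd_def by (blast intro: hermitian_entry)
    then show ?thesis using assms(4) by (simp add: v_def algebra_simps)
  qed
  finally show ?thesis
    using psd_form_nonneg[OF assms(1), of v]
    by (simp add: complex_norm_square[symmetric] algebra_simps)
qed

lemma psd_offdiag_bound:
  assumes "psd d A" "i < d" "j < d" "i \<noteq> j"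
  shows "(cmod (A i j))\<^sup>2 \<le> Re (A i i) * Re (A j j)"
proof (cases "A i j = 0")
  case True
  then show ?thesis using psd_diag_nonneg[OF assms(1)] assms(2,3) by simp
next
  case False
  have "0 \<le> Re (A i i) * x\<^sup>2 + 2 * cmod (A i j) * x * y + Re (A j j) * y\<^sup>2" for x y
  proof -
    define \<beta> where "\<beta> = of_real y * cnj (A i j) / of_real (cmod (A i j))"
    have "cnj (of_real x) * \<beta> * A i j = of_real (x * y * cmod (A i j))"
      unfolding \<beta>_def using False
      by (simp add: complex_norm_square[symmetric] power2_eq_square mult_ac)
    then have "Re (cnj (of_real x) * \<beta> * A i j) = x * y * cmod (A i j)"
      by (simp only: Re_complex_of_real)
    moreover have "cmod \<beta> = \<bar>y\<bar>"
      unfolding \<beta>_def using False by (simp add: norm_mult norm_divide)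
    ultimately show ?thesis
      using psd_form_two_indices[OF assms, of "of_real x" \<beta>] by (simp add: mult_ac)
  qed
  then show ?thesis by (rule binary_quadratic_nonneg_discriminant)
qed

lemma mtrace_mmult_povm2_True:
  assumes "povm2 d E"
  shows "mtrace d (mmult d (E True) \<rho>) = mtrace d \<rho> - mtrace d (mmult d (E False) \<rho>)"
proof -
  have "E True i j = (if i = j then 1 else 0) - E False i j" if "i < d" "j < d" for i j
  proof -
    have "E False i j + E True i j = (if i = j then 1 else 0)"
      using assms that unfolding povm2_def by blast
    then show ?thesis by (simp add: eq_diff_eq add.commute[of "E True i j"])
  qed
  then show ?thesis
    unfolding mtrace_def mmult_def
    by (simp add: left_diff_distrib sum_subtractf if_distrib[of "\<lambda>z. z * _"] cong: if_cong)
qed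

text \<open>Coordinates in the Pauli basis (X, Y, Z): a qubit state is \<rho> = (I + r\<cdot>(X, Y, Z))/2 with
  r = bloch_vector \<rho>, and a hermitian E is pauli_scalar E \<cdot> I + pauli_vector E \<cdot> (X, Y, Z).\<close>

definition bloch_vector :: "cmat \<Rightarrow> real^3" where
  "bloch_vector \<rho> = vector [2 * Re (\<rho> 0 1), - 2 * Im (\<rho> 0 1), Re (\<rho> 0 0) - Re (\<rho> 1 1)]"

definition pauli_scalar :: "cmat \<Rightarrow> real" where
  "pauli_scalar E = (Re (E 0 0) + Re (E 1 1)) / 2"

definition pauli_vector :: "cmat \<Rightarrow> real^3" where
  "pauli_vector E = vector [Re (E 0 1), - Im (E 0 1), (Re (E 0 0) - Re (E 1 1)) / 2]"

lemma inner_vector3: "(vector [a, b, c] :: real^3) \<bullet> vector [d, e, f] = a * d + b * e + c * f"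
  unfolding inner_vec_def by (simp add: sum_3)

lemma sum_lessThan_2: "(\<Sum>i<2. f i) = f 0 + f (1::nat)"
  by (simp add: numeral_2_eq_2)

lemma density_qubit_diag_sum:
  assumes "density 2 \<rho>"
  shows "Re (\<rho> 0 0) + Re (\<rho> 1 1) = 1"
  using arg_cong[OF conjunct2[OF assms[unfolded density_def]], of Re]
  by (simp add: mtrace_def sum_lessThan_2)

lemma norm_bloch_vector_le_1:
  assumes "density 2 \<rho>"
  shows "norm (bloch_vector \<rho>) \<le> 1"
proof -
  define a b where "a = Re (\<rho> 0 0)" and "b = Re (\<rho> 1 1)"
  have psd: "psd 2 \<rho>" using assms unfolding density_def by blast
  have "(norm (bloch_vector \<rho>))\<^sup>2 = 4 * (cmod (\<rho> 0 1))\<^sup>2 + (a - b)\<^sup>2"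
    unfolding power2_norm_eq_inner[of "bloch_vector \<rho>"]
    unfolding bloch_vector_def inner_vector3 cmod_power2 a_def b_def
    by (simp add: power2_eq_square)
  also have "\<dots> \<le> 4 * (a * b) + (a - b)\<^sup>2"
    using psd_offdiag_bound[OF psd, of 0 1] unfolding a_def b_def by simp
  also have "\<dots> = (a + b)\<^sup>2"
    by (simp add: power2_eq_square algebra_simps)
  also have "\<dots> = 1"
    using density_qubit_diag_sum[OF assms] unfolding a_def b_def by simp
  finally show ?thesis
    by (simp add: power_le_one_iff)
qed

lemma Re_mtrace_mmult_qubit:
  assumes "hermitian 2 E" "density 2 \<rho>"
  shows "Re (mtrace 2 (mmult 2 E \<rho>)) = pauli_scalar E + bloch_vector \<rho> \<bullet> pauli_vector E"
proof -
  have "hermitian 2 \<rho>" using assms(2) unfolding density_def psd_def by blast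
  then have "\<rho> 1 0 = cnj (\<rho> 0 1)" "Im (\<rho> 0 0) = 0" "Im (\<rho> 1 1) = 0"
    using hermitian_entry[OF _, of 2 _ 0 1] hermitian_diag_real by simp_all
  moreover have "E 1 0 = cnj (E 0 1)" "Im (E 0 0) = 0" "Im (E 1 1) = 0"
    using assms(1) hermitian_entry[OF _, of 2 _ 0 1] hermitian_diag_real by simp_all
  ultimately have "Re (mtrace 2 (mmult 2 E \<rho>))
      = Re (E 0 0) * Re (\<rho> 0 0) + Re (E 1 1) * Re (\<rho> 1 1)
      + 2 * (Re (E 0 1) * Re (\<rho> 0 1) + Im (E 0 1) * Im (\<rho> 0 1))"
    unfolding mtrace_def mmult_def sum_lessThan_2 by simp
  moreover have "Re (\<rho> 1 1) = 1 - Re (\<rho> 0 0)"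
    using density_qubit_diag_sum[OF assms(2)] by simp
  ultimately show ?thesis
    unfolding pauli_scalar_def bloch_vector_def pauli_vector_def inner_vector3
    by (simp only:) (simp add: field_simps)
qed

lemma povm2_qubit_outcome_likely_iff:
  assumes "povm2 2 E" "density 2 \<rho>"
  defines "s \<equiv> pauli_vector (E False)" and "c \<equiv> 1/2 - pauli_scalar (E False)"
  shows "Re (mtrace 2 (mmult 2 (E False) \<rho>)) > 1/2 \<longleftrightarrow> bloch_vector \<rho> \<bullet> s > c"
    and "Re (mtrace 2 (mmult 2 (E True) \<rho>)) > 1/2 \<longleftrightarrow> bloch_vector \<rho> \<bullet> s < c"
proof -
  have "hermitian 2 (E False)" using assms(1) unfolding povm2_def psd_def by blast
  note trace_False = Re_mtrace_mmult_qubit[OF this assms(2)]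
  show "Re (mtrace 2 (mmult 2 (E False) \<rho>)) > 1/2 \<longleftrightarrow> bloch_vector \<rho> \<bullet> s > c"
    unfolding trace_False s_def c_def by linarith
  have "mtrace 2 \<rho> = 1" using assms(2) unfolding density_def by blast
  then show "Re (mtrace 2 (mmult 2 (E True) \<rho>)) > 1/2 \<longleftrightarrow> bloch_vector \<rho> \<bullet> s < c"
    unfolding mtrace_mmult_povm2_True[OF assms(1)] using trace_False
    unfolding s_def c_def by (simp; linarith)
qed

theorem lemma1:
  fixes p :: real
  assumes "QRA 4 1 p" and "p > 1/2"
  shows "\<exists>(s :: nat \<Rightarrow> real^3) (c :: nat \<Rightarrow> real).
           \<forall>w :: bool list. length w = 4 \<longrightarrow>
             (\<exists>r :: real^3. norm r \<le> 1 \<and>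
                (\<forall>i<4. (\<not> w ! i \<longrightarrow> r \<bullet> s i > c i) \<and> (w ! i \<longrightarrow> r \<bullet> s i < c i)))"
proof -
  obtain \<rho> :: "bool list \<Rightarrow> cmat" and E :: "nat \<Rightarrow> bool \<Rightarrow> cmat" where
    states: "\<And>x. length x = 4 \<Longrightarrow> density 2 (\<rho> x)" and
    povms: "\<And>i. i < 4 \<Longrightarrow> povm2 2 (E i)" and
    success: "\<And>x i. length x = 4 \<Longrightarrow> i < 4 \<Longrightarrow>
      Re (mtrace 2 (mmult 2 (E i (x ! i)) (\<rho> x))) \<ge> p"
    using assms(1) unfolding QRA_def power_one_right by blast
  define s where "s i = pauli_vector (E i False)" for i
  define c where "c i = 1/2 - pauli_scalar (E i False)" for i
  have "\<forall>i<4. (\<not> w ! i \<longrightarrow> bloch_vector (\<rho> w) \<bullet> s i > c i)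
              \<and> (w ! i \<longrightarrow> bloch_vector (\<rho> w) \<bullet> s i < c i)"
    if "length w = 4" for w
  proof (intro allI impI conjI)
    fix i :: nat assume "i < 4"
    have "Re (mtrace 2 (mmult 2 (E i (w ! i)) (\<rho> w))) > 1/2"
      using success[OF that \<open>i < 4\<close>] assms(2) by linarith
    note likely = this povm2_qubit_outcome_likely_iff[OF povms[OF \<open>i < 4\<close>] states[OF that]]
    show "bloch_vector (\<rho> w) \<bullet> s i > c i" if "\<not> w ! i"
      using likely that unfolding s_def c_def by simp
    show "bloch_vector (\<rho> w) \<bullet> s i < c i" if "w ! i"
      using likely that unfolding s_def c_def by simp
  qed
  then show ?thesis
    using norm_bloch_vector_le_1[OF states] by blast
qed

end
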